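(* $c_2=1$, $c_3=c_4=\frac12$, $c_5=c_6=\frac25$, $c_7=\frac38$ and $c_8=\frac4{11}$.
   Context: A weighted digraph $D=(V,A,w)$ is a digraph without loops or parallel arcs (opposite arcs allowed) with weights $w:A\to\mathbb{R}_{\ge0}$; $w(D)$ is the total arc weight. For a partition $(X,Y)$ of $V$, $w(X,Y)$ is the total weight of arcs from $X$ to $Y$, and $\mathrm{mac}(D)=\max_{(X,Y)}w(X,Y)$. For an integer $\nu\ge1$, $c_\nu$ is the supremum of reals $c\ge0$ such that every acyclic weighted digraph $D$ whose longest directed path has exactly $\nu$ vertices satisfies $\mathrm{mac}(D)\ge c\cdot w(D)$. *)

theory Defs
  imports Complex_Main
begin

text \<open>A weighted digraph on a finite vertex set V (vertices drawn from nat; every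
finite digraph is isomorphic to one of these).\<close>

definition weighted_digraph :: "nat set \<Rightarrow> (nat \<times> nat) set \<Rightarrow> (nat \<times> nat \<Rightarrow> real) \<Rightarrow> bool" where
  "weighted_digraph V A w \<longleftrightarrow> finite V \<and> A \<subseteq> V \<times> V \<and> (\<forall>v. (v, v) \<notin> A)
     \<and> (\<forall>a\<in>A. 0 \<le> w a)"

definition total_weight :: "(nat \<times> nat) set \<Rightarrow> (nat \<times> nat \<Rightarrow> real) \<Rightarrow> real" where
  "total_weight A w = (\<Sum>a\<in>A. w a)"

definition cut_weight :: "(nat \<times> nat) set \<Rightarrow> (nat \<times> nat \<Rightarrow> real) \<Rightarrow> nat set \<Rightarrow> nat set \<Rightarrow> real" where
  "cut_weight A w X Y = (\<Sum>a\<in>A \<inter> (X \<times> Y). w a)"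

definition mac :: "nat set \<Rightarrow> (nat \<times> nat) set \<Rightarrow> (nat \<times> nat \<Rightarrow> real) \<Rightarrow> real" where
  "mac V A w = Max ((\<lambda>X. cut_weight A w X (V - X)) ` Pow V)"

definition dipath :: "nat set \<Rightarrow> (nat \<times> nat) set \<Rightarrow> nat list \<Rightarrow> bool" where
  "dipath V A vs \<longleftrightarrow> vs \<noteq> [] \<and> set vs \<subseteq> V \<and> distinct vs
     \<and> (\<forall>i. Suc i < length vs \<longrightarrow> (vs ! i, vs ! Suc i) \<in> A)"

definition longest_path_vertices :: "nat set \<Rightarrow> (nat \<times> nat) set \<Rightarrow> nat \<Rightarrow> bool" where
  "longest_path_vertices V A \<nu> \<longleftrightarrow>
     (\<exists>vs. dipath V A vs \<and> length vs = \<nu>) \<and> (\<forall>vs. dipath V A vs \<longrightarrow> length vs \<le> \<nu>)"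

definition c_const :: "nat \<Rightarrow> real" where
  "c_const \<nu> = Sup {c. 0 \<le> c \<and> (\<forall>V A w. weighted_digraph V A w \<and> acyclic A
        \<and> longest_path_vertices V A \<nu> \<longrightarrow> c * total_weight A w \<le> mac V A w)}"

end

theory Submission
  imports Defs
begin

text \<open>
  If every directed path of an acyclic digraph D has at most \<nu> vertices, then D has a height
  function h into {0..<\<nu>} that increases strictly along arcs. Any set S of heights yields the
  cut between the vertices with height in S and the rest, which contains every arc uv with
  h u \<in> S and h v \<notin> S. So a family of height sets with nonnegative weights summing to s, in
  which every pair i < j of heights is separated with total weight at least 1, gives
  w(D) \<le> s \<cdot> mac(D), i.e. c_\<nu> \<ge> 1/s. Conversely, a weighting of the transitive tournament
  on \<nu> vertices in which every cut carries at most a 1/s fraction of the total weight shows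
  c_\<nu> \<le> 1/s. For \<nu> \<le> 8 both certificates are small and are checked by simplification.
\<close>

lemma dipath_rtrancl:
  assumes "dipath V A vs" "i \<le> j" "j < length vs"
  shows "(vs ! i, vs ! j) \<in> A\<^sup>*"
  using assms(2,3)
proof (induction j)
  case 0
  then show ?case by simp
next
  case (Suc j)
  show ?case
  proof (cases "i = Suc j")
    case False
    with Suc have "(vs ! i, vs ! j) \<in> A\<^sup>*" by simp
    moreover have "(vs ! j, vs ! Suc j) \<in> A"
      using assms(1) Suc.prems unfolding dipath_def by blast
    ultimately show ?thesis by (rule rtrancl_into_rtrancl)
  qed simp
qed

lemma dipath_snoc:
  assumes "dipath V A vs" "v \<in> V" "v \<notin> set vs" "(last vs, v) \<in> A"
  shows "dipath V A (vs @ [v])"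
  unfolding dipath_def
proof (intro conjI allI impI)
  show "vs @ [v] \<noteq> []" "set (vs @ [v]) \<subseteq> V" "distinct (vs @ [v])"
    using assms unfolding dipath_def by auto
  fix i assume i: "Suc i < length (vs @ [v])"
  show "((vs @ [v]) ! i, (vs @ [v]) ! Suc i) \<in> A"
  proof (cases "Suc i < length vs")
    case True
    then show ?thesis using assms(1) unfolding dipath_def by (simp add: nth_append)
  next
    case False
    then have last: "Suc i = length vs" using i by simp
    then have "vs ! i = last vs" by (metis diff_Suc_1 last_conv_nth list.size(3) nat.discI)
    then show ?thesis using last assms(4) by (simp add: nth_append)
  qed
qed

lemma acyclic_height_function:
  assumes fin: "finite V" and sub: "A \<subseteq> V \<times> V" and acy: "acyclic A"
    and bounded: "\<forall>vs. dipath V A vs \<longrightarrow> length vs \<le> \<nu>"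
  obtains h where "\<forall>v\<in>V. h v < \<nu>" and "\<forall>u v. (u, v) \<in> A \<longrightarrow> h u < h v"
proof
  define P where "P v = {vs. dipath V A vs \<and> last vs = v}" for v
  define lp where "lp v = Max (length ` P v)" for v
  have finite_P: "finite (P v)" for v
  proof -
    have "P v \<subseteq> {xs. set xs \<subseteq> V \<and> length xs \<le> \<nu>}"
      using bounded unfolding P_def dipath_def by auto
    then show ?thesis using finite_lists_length_le[OF fin] finite_subset by blast
  qed
  have singleton_P: "[v] \<in> P v" if "v \<in> V" for v
    using that unfolding P_def dipath_def by simp
  have lp_pos: "1 \<le> lp v" if "v \<in> V" for v
  proof -
    have "length [v] \<le> lp v"
      unfolding lp_def using finite_P singleton_P[OF that]
      by (metis Max_ge finite_imageI image_eqI)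
    then show ?thesis by simp
  qed
  show "\<forall>v\<in>V. lp v - 1 < \<nu>"
  proof
    fix v assume v: "v \<in> V"
    have "lp v \<le> \<nu>"
      using singleton_P[OF v] finite_P bounded unfolding lp_def P_def by (subst Max_le_iff) auto
    with lp_pos[OF v] show "lp v - 1 < \<nu>" by linarith
  qed
  show "\<forall>u v. (u, v) \<in> A \<longrightarrow> lp u - 1 < lp v - 1"
  proof (intro allI impI)
    fix u v assume uv: "(u, v) \<in> A"
    then have u: "u \<in> V" and v: "v \<in> V" using sub by auto
    have "lp u \<in> length ` P u"
      unfolding lp_def using finite_P singleton_P[OF u] by (intro Max_in) auto
    then obtain vs where vs: "vs \<in> P u" "length vs = lp u" by auto
    then have path: "dipath V A vs" and last: "last vs = u" unfolding P_def by auto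
    have "v \<notin> set vs"
    proof
      assume "v \<in> set vs"
      then obtain i where i: "i < length vs" "vs ! i = v" by (auto simp: in_set_conv_nth)
      have "vs ! (length vs - 1) = u"
        using last path unfolding dipath_def by (simp add: last_conv_nth)
      then have "(v, u) \<in> A\<^sup>*" using dipath_rtrancl[OF path, of i "length vs - 1"] i by simp
      then have "(v, v) \<in> A\<^sup>+" using uv by (rule rtrancl_into_trancl1)
      then show False using acy unfolding acyclic_def by blast
    qed
    then have "vs @ [v] \<in> P v" using dipath_snoc[OF path v] last uv unfolding P_def by simp
    then have "length (vs @ [v]) \<le> lp v"
      unfolding lp_def using finite_P by (metis Max_ge finite_imageI image_eqI)
    then show "lp u - 1 < lp v - 1" using vs lp_pos[OF u] by simp
  qed
qed

definition separating_cover :: "nat \<Rightarrow> (real \<times> nat set) list \<Rightarrow> bool" where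
  "separating_cover \<nu> D \<longleftrightarrow> (\<forall>(q, S)\<in>set D. 0 \<le> q) \<and>
     (\<forall>i j. i < j \<longrightarrow> j < \<nu> \<longrightarrow> 1 \<le> (\<Sum>(q, S)\<leftarrow>D. if i \<in> S \<and> j \<notin> S then q else 0))"

lemma sum_list_sum_commute:
  "(\<Sum>d\<leftarrow>D. \<Sum>a\<in>A. f d a) = (\<Sum>a\<in>A. \<Sum>d\<leftarrow>D. f d a)"
  by (induction D) (auto simp: sum.distrib)

lemma cut_le_mac:
  assumes "weighted_digraph V A w" "X \<subseteq> V"
  shows "cut_weight A w X (V - X) \<le> mac V A w"
  using assms unfolding mac_def weighted_digraph_def by (intro Max_ge) auto

lemma total_weight_le_cover_mac:
  assumes wd: "weighted_digraph V A w" and acy: "acyclic A"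
    and bounded: "\<forall>vs. dipath V A vs \<longrightarrow> length vs \<le> \<nu>" and cover: "separating_cover \<nu> D"
  shows "total_weight A w \<le> (\<Sum>(q, S)\<leftarrow>D. q) * mac V A w"
proof -
  have fin: "finite V" and sub: "A \<subseteq> V \<times> V" and w_nonneg: "\<forall>a\<in>A. 0 \<le> w a"
    using wd unfolding weighted_digraph_def by auto
  then have finA: "finite A" using finite_subset by blast
  obtain h where h_lt: "\<forall>v\<in>V. h v < \<nu>" and h_mono: "\<forall>u v. (u, v) \<in> A \<longrightarrow> h u < h v"
    using acyclic_height_function[OF fin sub acy bounded] by blast
  define sep where "sep S a = (h (fst a) \<in> S \<and> h (snd a) \<notin> S)" for S a
  have level_cut: "cut_weight A w {v\<in>V. h v \<in> S} (V - {v\<in>V. h v \<in> S})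
      = (\<Sum>a\<in>A. if sep S a then w a else 0)" for S
  proof -
    have "A \<inter> ({v\<in>V. h v \<in> S} \<times> (V - {v\<in>V. h v \<in> S})) = {a\<in>A. sep S a}"
      using sub unfolding sep_def by auto
    then show ?thesis unfolding cut_weight_def using sum.inter_filter[OF finA] by simp
  qed
  have separated: "1 \<le> (\<Sum>(q, S)\<leftarrow>D. if sep S a then q else 0)" if "a \<in> A" for a
    using that cover h_mono h_lt sub unfolding separating_cover_def sep_def by (cases a) auto
  have "total_weight A w \<le> (\<Sum>a\<in>A. w a * (\<Sum>(q, S)\<leftarrow>D. if sep S a then q else 0))"
    unfolding total_weight_def using separated w_nonneg
    by (intro sum_mono) (metis mult.right_neutral mult_left_mono)
  also have "\<dots> = (\<Sum>a\<in>A. \<Sum>(q, S)\<leftarrow>D. q * (if sep S a then w a else 0))"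
    by (intro sum.cong refl) (induction D, auto simp: algebra_simps)
  also have "\<dots> = (\<Sum>(q, S)\<leftarrow>D. q * cut_weight A w {v\<in>V. h v \<in> S} (V - {v\<in>V. h v \<in> S}))"
    by (simp add: sum_list_sum_commute[symmetric] level_cut sum_distrib_left case_prod_unfold)
  also have "\<dots> \<le> (\<Sum>(q, S)\<leftarrow>D. q * mac V A w)"
    using cover unfolding separating_cover_def
    by (intro sum_list_mono) (auto intro!: mult_left_mono cut_le_mac[OF wd])
  also have "\<dots> = (\<Sum>(q, S)\<leftarrow>D. q) * mac V A w"
    by (induction D) (auto simp: algebra_simps)
  finally show ?thesis .
qed

definition tournament_arcs :: "nat \<Rightarrow> (nat \<times> nat) list" where
  "tournament_arcs n = [(i, j). j \<leftarrow> [0..<n], i \<leftarrow> [0..<j]]"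

lemma set_tournament_arcs: "set (tournament_arcs n) = {(i, j). i < j \<and> j < n}"
  unfolding tournament_arcs_def by force

lemma separating_coverI:
  assumes "\<forall>(q, S)\<in>set D. 0 \<le> q"
    and "list_all (\<lambda>(i, j). 1 \<le> (\<Sum>(q, S)\<leftarrow>D. if i \<in> S \<and> j \<notin> S then q else 0))
           (tournament_arcs \<nu>)"
  shows "separating_cover \<nu> D"
  using assms unfolding separating_cover_def list_all_iff by (auto simp: set_tournament_arcs)

lemma distinct_tournament_arcs: "distinct (tournament_arcs n)"
proof (induction n)
  case (Suc n)
  have "tournament_arcs (Suc n) = tournament_arcs n @ map (\<lambda>i. (i, n)) [0..<n]"
    unfolding tournament_arcs_def by simp
  with Suc show ?case by (auto simp: distinct_map inj_on_def set_tournament_arcs)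
qed (simp add: tournament_arcs_def)

lemma tournament_weighted_digraph:
  "\<forall>a. 0 \<le> w a \<Longrightarrow> weighted_digraph {0..<n} (set (tournament_arcs n)) w"
  unfolding weighted_digraph_def by (auto simp: set_tournament_arcs)

lemma tournament_acyclic: "acyclic (set (tournament_arcs n))"
proof -
  have "(x, y) \<in> (set (tournament_arcs n))\<^sup>+ \<Longrightarrow> x < y" for x y
    by (induction rule: trancl_induct) (auto simp: set_tournament_arcs)
  then show ?thesis unfolding acyclic_def by blast
qed

lemma tournament_longest_path:
  assumes "1 \<le> n"
  shows "longest_path_vertices {0..<n} (set (tournament_arcs n)) n"
  unfolding longest_path_vertices_def
proof (intro conjI allI impI)
  show "\<exists>vs. dipath {0..<n} (set (tournament_arcs n)) vs \<and> length vs = n"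
    using assms by (intro exI[of _ "[0..<n]"]) (auto simp: dipath_def set_tournament_arcs)
  fix vs assume "dipath {0..<n} (set (tournament_arcs n)) vs"
  then have "set vs \<subseteq> {0..<n}" "distinct vs" unfolding dipath_def by auto
  then show "length vs \<le> n"
    by (metis card_atLeastLessThan card_mono distinct_card finite_atLeastLessThan diff_zero)
qed

lemma tournament_total_weight:
  "total_weight (set (tournament_arcs n)) w = (\<Sum>a\<leftarrow>tournament_arcs n. w a)"
  unfolding total_weight_def by (simp add: sum_list_distinct_conv_sum_set distinct_tournament_arcs)

lemma tournament_cut_weight:
  assumes "X \<subseteq> {0..<n}"
  shows "cut_weight (set (tournament_arcs n)) w X ({0..<n} - X)
    = (\<Sum>a\<leftarrow>tournament_arcs n. if fst a \<in> X \<and> snd a \<notin> X then w a else 0)"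
proof -
  have "set (tournament_arcs n) \<inter> (X \<times> ({0..<n} - X))
      = {a \<in> set (tournament_arcs n). fst a \<in> X \<and> snd a \<notin> X}"
    using assms by (auto simp: set_tournament_arcs)
  then show ?thesis unfolding cut_weight_def
    by (simp add: sum.inter_filter sum_list_distinct_conv_sum_set distinct_tournament_arcs)
qed

definition mac_ratio_bound :: "nat \<Rightarrow> real \<Rightarrow> bool" where
  "mac_ratio_bound \<nu> c \<longleftrightarrow> 0 \<le> c \<and> (\<forall>V A w. weighted_digraph V A w \<and> acyclic A
     \<and> longest_path_vertices V A \<nu> \<longrightarrow> c * total_weight A w \<le> mac V A w)"

lemma mac_ratio_bound_cover:
  assumes "separating_cover \<nu> D" "(\<Sum>(q, S)\<leftarrow>D. q) = s" "0 < s"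
  shows "mac_ratio_bound \<nu> (1 / s)"
  unfolding mac_ratio_bound_def
proof (intro conjI allI impI)
  fix V A w assume "weighted_digraph V A w \<and> acyclic A \<and> longest_path_vertices V A \<nu>"
  then have "total_weight A w \<le> s * mac V A w"
    using total_weight_le_cover_mac[of V A w \<nu> D] assms unfolding longest_path_vertices_def by auto
  then show "1 / s * total_weight A w \<le> mac V A w" using assms(3) by (simp add: field_simps)
qed (use assms(3) in simp)

lemma mac_ratio_bound_tournament:
  assumes bound: "mac_ratio_bound \<nu> c" and w_nonneg: "\<forall>a. 0 \<le> w a"
    and total_pos: "0 < (\<Sum>a\<leftarrow>tournament_arcs \<nu>. w a)"
    and cuts: "\<And>X. s * (\<Sum>a\<leftarrow>tournament_arcs \<nu>. if fst a \<in> X \<and> snd a \<notin> X then w a else 0)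
                 \<le> (\<Sum>a\<leftarrow>tournament_arcs \<nu>. w a)"
    and "0 < s"
  shows "c \<le> 1 / s"
proof -
  let ?A = "set (tournament_arcs \<nu>)" and ?T = "\<Sum>a\<leftarrow>tournament_arcs \<nu>. w a"
  have "tournament_arcs \<nu> \<noteq> []" using total_pos by auto
  then have "1 \<le> \<nu>" unfolding tournament_arcs_def by (cases \<nu>) auto
  then have "c * ?T \<le> mac {0..<\<nu>} ?A w"
    using bound tournament_weighted_digraph[OF w_nonneg] tournament_acyclic
      tournament_longest_path tournament_total_weight
    unfolding mac_ratio_bound_def by metis
  also have "mac {0..<\<nu>} ?A w \<le> ?T / s"
    unfolding mac_def using cuts \<open>0 < s\<close>
    by (subst Max_le_iff) (auto simp: tournament_cut_weight field_simps)
  finally show ?thesis using total_pos \<open>0 < s\<close> by (simp add: field_simps)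
qed

lemma c_const_eqI:
  assumes "separating_cover \<nu> D" "(\<Sum>(q, S)\<leftarrow>D. q) = s" "0 < s"
    and "\<forall>a. 0 \<le> w a" "0 < (\<Sum>a\<leftarrow>tournament_arcs \<nu>. w a)"
    and "\<And>X. s * (\<Sum>a\<leftarrow>tournament_arcs \<nu>. if fst a \<in> X \<and> snd a \<notin> X then w a else 0)
                 \<le> (\<Sum>a\<leftarrow>tournament_arcs \<nu>. w a)"
    and "c = 1 / s"
  shows "c_const \<nu> = c"
proof -
  have "c_const \<nu> = Sup (Collect (mac_ratio_bound \<nu>))"
    unfolding c_const_def mac_ratio_bound_def by simp
  also have "\<dots> = c"
    unfolding \<open>c = 1 / s\<close> using mac_ratio_bound_cover[OF assms(1-3)] mac_ratio_bound_tournament[OF _ assms(4-6,3)]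
    by (intro cSup_eq_maximum) auto
  finally show ?thesis .
qed

primrec arc_weights :: "((nat \<times> nat) \<times> real) list \<Rightarrow> nat \<times> nat \<Rightarrow> real" where
  "arc_weights [] a = 0"
| "arc_weights (bx # ws) a = (if a = fst bx then snd bx else arc_weights ws a)"

lemma arc_weights_nonneg: "\<forall>(a, x)\<in>set ws. 0 \<le> x \<Longrightarrow> 0 \<le> arc_weights ws a"
  by (induction ws) auto

lemma c_const_2: "c_const 2 = 1"
proof -
  define w where "w = arc_weights [((0, 1), 1)]"
  define D :: "(real \<times> nat set) list" where "D = [(1, {0})]"
  show ?thesis
    by (rule c_const_eqI[where s = "1" and D = D and w = w];
        (intro separating_coverI allI arc_weights_nonneg)?;
        simp add: tournament_arcs_def upt_rec w_def D_def)
qed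

lemma c_const_3: "c_const 3 = 1/2"
proof -
  define w where "w = arc_weights [((0, 1), 1), ((1, 2), 1)]"
  define D :: "(real \<times> nat set) list" where "D = [(1, {0}), (1, {1})]"
  show ?thesis
    by (rule c_const_eqI[where s = "2" and D = D and w = w];
        (intro separating_coverI allI arc_weights_nonneg)?;
        simp add: tournament_arcs_def upt_rec w_def D_def)
qed

lemma c_const_4: "c_const 4 = 1/2"
proof -
  define w where "w = arc_weights [((0, 1), 1), ((1, 2), 1)]"
  define D :: "(real \<times> nat set) list" where "D = [(1, {0, 1}), (1, {0, 2})]"
  show ?thesis
    by (rule c_const_eqI[where s = "2" and D = D and w = w];
        (intro separating_coverI allI arc_weights_nonneg)?;
        simp add: tournament_arcs_def upt_rec w_def D_def)
qed

lemma c_const_5: "c_const 5 = 2/5"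
proof -
  define w where "w = arc_weights [((0, 1), 1), ((1, 2), 1), ((1, 3), 1), ((2, 3), 1),
    ((3, 4), 1)]"
  define D :: "(real \<times> nat set) list" where "D = [(1/2, {0, 1}), (1/2, {0, 2}),
    (1/2, {1, 2}), (1/2, {0, 3}), (1/2, {1, 3})]"
  show ?thesis
    by (rule c_const_eqI[where s = "5/2" and D = D and w = w];
        (intro separating_coverI allI arc_weights_nonneg)?;
        simp add: tournament_arcs_def upt_rec w_def D_def)
qed

lemma c_const_6: "c_const 6 = 2/5"
proof -
  define w where "w = arc_weights [((0, 1), 1), ((1, 3), 1), ((1, 4), 1), ((3, 4), 1),
    ((4, 5), 1)]"
  define D :: "(real \<times> nat set) list" where "D = [(1/2, {1, 2}), (1/2, {0, 1, 3}),
    (1/2, {0, 2, 3}), (1/2, {0, 1, 4}), (1/2, {0, 2, 4})]"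
  show ?thesis
    by (rule c_const_eqI[where s = "5/2" and D = D and w = w];
        (intro separating_coverI allI arc_weights_nonneg)?;
        simp add: tournament_arcs_def upt_rec w_def D_def)
qed

lemma c_const_7: "c_const 7 = 3/8"
proof -
  define w where "w = arc_weights [((0, 1), 1), ((1, 2), 1), ((1, 3), 1), ((2, 3), 1),
    ((3, 4), 1), ((3, 5), 1), ((4, 5), 1), ((5, 6), 1)]"
  define D :: "(real \<times> nat set) list" where "D = [(1/3, {0, 1, 3}), (1/3, {0, 2, 3}),
    (1/3, {0, 2, 4}), (1/3, {0, 1, 2, 4}), (1/3, {0, 1, 3, 4}), (1/3, {0, 1, 5}),
    (1/3, {1, 2, 5}), (1/3, {0, 2, 3, 5})]"
  show ?thesis
    by (rule c_const_eqI[where s = "8/3" and D = D and w = w];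
        (intro separating_coverI allI arc_weights_nonneg)?;
        simp add: tournament_arcs_def upt_rec w_def D_def)
qed

lemma c_const_8: "c_const 8 = 4/11"
proof -
  define w where "w = arc_weights [((0, 1), 4), ((1, 2), 4), ((1, 3), 4), ((1, 4), 1),
    ((2, 3), 4), ((2, 4), 1), ((3, 4), 3), ((3, 5), 2), ((3, 6), 2), ((4, 5), 2), ((4, 6), 2),
    ((5, 6), 2), ((6, 7), 2)]"
  define D :: "(real \<times> nat set) list" where "D = [(1/4, {0, 1, 2, 4}), (1/8, {0, 3, 4}),
    (1/8, {1, 3, 4}), (1/8, {0, 1, 3, 4}), (1/8, {0, 2, 3, 4}), (1/4, {0, 1, 2, 5}),
    (1/8, {0, 1, 3, 5}), (3/8, {0, 2, 3, 5}), (1/4, {0, 1, 4, 5}), (1/4, {1, 2, 6}),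
    (3/8, {0, 1, 3, 6}), (1/8, {0, 2, 3, 6}), (1/4, {0, 2, 4, 6})]"
  show ?thesis
    by (rule c_const_eqI[where s = "11/4" and D = D and w = w];
        (intro separating_coverI allI arc_weights_nonneg)?;
        simp add: tournament_arcs_def upt_rec w_def D_def)
qed

theorem theoremA:
  shows "c_const 2 = 1 \<and> c_const 3 = 1/2 \<and> c_const 4 = 1/2 \<and> c_const 5 = 2/5
    \<and> c_const 6 = 2/5 \<and> c_const 7 = 3/8 \<and> c_const 8 = 4/11"
  using c_const_2 c_const_3 c_const_4 c_const_5 c_const_6 c_const_7 c_const_8 by simp

end
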